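(* For $n\ge 1$ let $\bm{N}=(1,1,\ldots,1,-n)\in\mathbb{Z}^{n+1}$ and $c_n:=K_n(\bm{N})$. Then, as $n\to\infty$, \[ \log c_n \;\geq\; \frac{n}{4}\log^2 n - O(n\log n). \] Furthermore, $c_n \geq (n+1)^{n-1}$ for all $n\geq 3000$.
   Context: For an integer $n\ge1$ and $\bm{N}=(N_0,\ldots,N_{n-1},N_n)\in\mathbb{Z}^{n+1}$ with $N_n=-\sum_{i<n}N_i$, the flow polytope $\mathcal{F}_n(\bm{N})$ is the set of $\bm{f}=(f_{ij})_{0\le i<j\le n}\in\mathbb{R}_{\ge0}^{\binom{n+1}{2}}$ such that for each vertex $i\in\{0,\ldots,n\}$, $\sum_{j>i} f_{ij}-\sum_{k<i} f_{ki}=N_i$ (flows on the complete directed acyclic graph on $\{0,\ldots,n\}$ with edges $i\to j$ for $i<j$). $K_n(\bm{N})$ denotes the number of integer points of $\mathcal{F}_n(\bm{N})$ (the Kostant partition function). $\log$ is the natural logarithm. *)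

theory Defs
  imports "HOL-Analysis.Analysis"
begin

text \<open>A flow is a function f :: nat => nat => int, where
  f i j is the flow on edge i -> j; it is required to vanish outside the edge set
  so that flows correspond bijectively to integer points of the flow polytope.\<close>

definition flow_points :: "nat \<Rightarrow> (nat \<Rightarrow> int) \<Rightarrow> (nat \<Rightarrow> nat \<Rightarrow> int) set" where
  "flow_points n N = {f.
      (\<forall>i j. \<not> (i < j \<and> j \<le> n) \<longrightarrow> f i j = 0) \<and>
      (\<forall>i j. i < j \<and> j \<le> n \<longrightarrow> f i j \<ge> 0) \<and>
      (\<forall>i\<le>n. (\<Sum>j\<in>{i<..n}. f i j) - (\<Sum>k<i. f k i) = N i)}"

text \<open>Kostant partition function K_n(N): number of integer points of the flow polytope.
  (Defined for N with N n = - sum of the others.)\<close>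
definition kostant :: "nat \<Rightarrow> (nat \<Rightarrow> int) \<Rightarrow> nat" where
  "kostant n N = card (flow_points n N)"

definition Nvec :: "nat \<Rightarrow> nat \<Rightarrow> int" where
  "Nvec n i = (if i < n then 1 else if i = n then - int n else 0)"

definition c_seq :: "nat \<Rightarrow> nat" where
  "c_seq n = kostant n (Nvec n)"

end

theory Submission
  imports Defs "HOL-Real_Asymp.Real_Asymp"
begin

text \<open>Integer flows for (1,\<dots>,1,-n) are produced from families of unit jumps: vertex i < n
  emits one unit, which either travels along the path 0 \<rightarrow> 1 \<rightarrow> \<dots> \<rightarrow> n or jumps directly
  from some k to a later vertex j \<in> g k. The flow is feasible as long as the number of jumps
  passing over the edge i \<rightarrow> i + 1 never exceeds the i + 1 units available there, and distinct
  jump families give distinct flows. Letting each of roughly n/2 vertices choose q jumps among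
  the next 4q vertices gives at least (4q choose q)^(n/2) \<ge> 2^(qn) flows. With q \<approx> log n
  this yields c_n \<ge> (n+1)^(n-1); with q \<approx> \<surd>n/4 it yields log c_n \<ge> n^(3/2) log 2 / 4 - O(n),
  which eventually dominates (n/4) log^2 n.\<close>

lemma flow_points_out_flow_le:
  assumes f: "f \<in> flow_points n N" and M: "\<forall>k\<le>n. N k \<le> M"
  shows "i \<le> n \<Longrightarrow> (\<Sum>j\<in>{i<..n}. f i j) \<le> 2 ^ i * M"
proof (induction i rule: less_induct)
  case (less i)
  have nonneg: "\<And>a b. a < b \<Longrightarrow> b \<le> n \<Longrightarrow> 0 \<le> f a b"
    using f unfolding flow_points_def by blast
  have "(\<Sum>j\<in>{i<..n}. f i j) = N i + (\<Sum>k<i. f k i)"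
    using f less.prems unfolding flow_points_def by auto
  also have "(\<Sum>k<i. f k i) \<le> (\<Sum>k<i. \<Sum>j\<in>{k<..n}. f k j)"
    using less.prems nonneg by (intro sum_mono member_le_sum) auto
  also have "\<dots> \<le> (\<Sum>k<i. 2 ^ k * M)"
    using less by (intro sum_mono) auto
  also have "\<dots> = 2 ^ i * M - M"
    by (induction i) (auto simp: algebra_simps)
  finally show ?case
    using M less.prems by fastforce
qed

lemma flow_points_entry_bound:
  assumes f: "f \<in> flow_points n N"
  shows "f i j \<in> {0..2 ^ n * (\<Sum>k\<le>n. \<bar>N k\<bar>)}"
proof -
  define M where "M = (\<Sum>k\<le>n. \<bar>N k\<bar>)"
  have "0 \<le> M"
    unfolding M_def by (simp add: sum_nonneg)
  have N_le: "\<forall>k\<le>n. N k \<le> M"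
  proof (intro allI impI)
    fix k assume "k \<le> n"
    then have "\<bar>N k\<bar> \<le> M"
      unfolding M_def by (intro member_le_sum) auto
    then show "N k \<le> M"
      by linarith
  qed
  have nonneg: "\<And>j. i < j \<Longrightarrow> j \<le> n \<Longrightarrow> 0 \<le> f i j"
    using f unfolding flow_points_def by auto
  show ?thesis
  proof (cases "i < j \<and> j \<le> n")
    case True
    have "f i j \<le> (\<Sum>j\<in>{i<..n}. f i j)"
      using True nonneg by (intro member_le_sum) auto
    also have "\<dots> \<le> 2 ^ i * M"
      using True by (intro flow_points_out_flow_le[OF f N_le]) auto
    also have "\<dots> \<le> 2 ^ n * M"
      using True \<open>0 \<le> M\<close> by (intro mult_right_mono power_increasing) auto
    finally show ?thesis
      using True nonneg unfolding M_def by auto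
  next
    case False
    then show ?thesis
      using f \<open>0 \<le> M\<close> unfolding flow_points_def M_def by auto
  qed
qed

lemma finite_flow_points: "finite (flow_points n N)"
proof -
  define rows where "rows = {g :: nat \<Rightarrow> int.
    \<forall>j. (j \<in> {..n} \<longrightarrow> g j \<in> {0..2 ^ n * (\<Sum>k\<le>n. \<bar>N k\<bar>)}) \<and> (j \<notin> {..n} \<longrightarrow> g j = 0)}"
  have "flow_points n N \<subseteq> {f. \<forall>i. (i \<in> {..n} \<longrightarrow> f i \<in> rows) \<and> (i \<notin> {..n} \<longrightarrow> f i = (\<lambda>_. 0))}"
  proof
    fix f assume f: "f \<in> flow_points n N"
    then have zero: "f i j = 0" if "\<not> (i < j \<and> j \<le> n)" for i j
      using that unfolding flow_points_def by blast
    have "f i \<in> rows" for i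
      unfolding rows_def using flow_points_entry_bound[OF f, of i] zero[of i] by simp
    moreover have "f i = (\<lambda>_. 0)" if "i \<notin> {..n}" for i
      using zero[of i] that by (simp add: fun_eq_iff)
    ultimately show "f \<in> {f. \<forall>i. (i \<in> {..n} \<longrightarrow> f i \<in> rows) \<and> (i \<notin> {..n} \<longrightarrow> f i = (\<lambda>_. 0))}"
      by blast
  qed
  moreover have "finite rows"
    unfolding rows_def by (intro finite_set_of_finite_funs) auto
  then have "finite {f. \<forall>i. (i \<in> {..n} \<longrightarrow> f i \<in> rows) \<and> (i \<notin> {..n} \<longrightarrow> f i = (\<lambda>_. 0))}"
    by (intro finite_set_of_finite_funs) auto
  ultimately show ?thesis
    by (rule finite_subset)
qed

text \<open>A jump family g sends one unit from k to each j \<in> g k; all other units move along the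
  path 0 \<rightarrow> 1 \<rightarrow> \<dots> \<rightarrow> n, so that path_load g i is the flow on the edge i \<rightarrow> i + 1: the i + 1 units
  emitted by 0, \<dots>, i minus the jumps passing over that edge.\<close>

definition path_load :: "(nat \<Rightarrow> nat set) \<Rightarrow> nat \<Rightarrow> int" where
  "path_load g i = int (i + 1) - (\<Sum>k\<le>i. int (card (g k \<inter> {i<..})))"

definition jump_flow :: "nat \<Rightarrow> (nat \<Rightarrow> nat set) \<Rightarrow> nat \<Rightarrow> nat \<Rightarrow> int" where
  "jump_flow n g i j =
     (if i < j \<and> j \<le> n then of_bool (j \<in> g i) + (if j = Suc i then path_load g i else 0) else 0)"

definition admissible_jumps :: "nat \<Rightarrow> (nat \<Rightarrow> nat set) \<Rightarrow> bool" where
  "admissible_jumps n g \<longleftrightarrow>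
     (\<forall>k. g k \<subseteq> {Suc k<..n}) \<and> (\<forall>i<n. (\<Sum>k\<le>i. card (g k \<inter> {i<..})) \<le> i + 1)"

lemma path_load_0: "g 0 \<subseteq> {0<..} \<Longrightarrow> path_load g 0 = 1 - int (card (g 0))"
  by (simp add: path_load_def Int_absorb2)

lemma path_load_Suc:
  assumes fin: "\<And>k. finite (g k)" and "g (Suc m) \<subseteq> {Suc m<..}"
  shows "path_load g (Suc m) =
    path_load g m + 1 + (\<Sum>k<Suc m. of_bool (Suc m \<in> g k)) - int (card (g (Suc m)))"
proof -
  have split: "int (card (g k \<inter> {m<..})) = int (card (g k \<inter> {Suc m<..})) + of_bool (Suc m \<in> g k)" for k
  proof -
    have "g k \<inter> {m<..} = (g k \<inter> {Suc m<..}) \<union> (g k \<inter> {Suc m})" by auto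
    then have "card (g k \<inter> {m<..}) = card (g k \<inter> {Suc m<..}) + card (g k \<inter> {Suc m})"
      using fin by (simp add: card_Un_disjoint disjoint_iff)
    then show ?thesis by auto
  qed
  have "g (Suc m) \<inter> {Suc m<..} = g (Suc m)" using assms(2) by auto
  then show ?thesis
    unfolding path_load_def lessThan_Suc_atMost by (simp add: split sum.distrib)
qed

lemma path_load_nonneg:
  assumes "admissible_jumps n g" "i < n"
  shows "0 \<le> path_load g i"
proof -
  have "(\<Sum>k\<le>i. card (g k \<inter> {i<..})) \<le> i + 1"
    using assms unfolding admissible_jumps_def by blast
  then show ?thesis
    unfolding path_load_def by (simp flip: of_nat_sum)
qed

lemma path_load_last:
  assumes "\<And>k. g k \<subseteq> {..n}"
  shows "path_load g n = int n + 1"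
proof -
  have "g k \<inter> {n<..} = {}" for k
    using assms[of k] by auto
  then show ?thesis
    unfolding path_load_def by simp
qed

lemma sum_jump_flow_out:
  assumes "g i \<subseteq> {Suc i<..n}" "i \<le> n"
  shows "(\<Sum>j\<in>{i<..n}. jump_flow n g i j) = int (card (g i)) + (if i < n then path_load g i else 0)"
proof -
  have jumps_within: "{i<..n} \<inter> g i = g i"
    using assms(1) by auto
  have "(\<Sum>j\<in>{i<..n}. jump_flow n g i j) =
      (\<Sum>j\<in>{i<..n}. of_bool (j \<in> g i)) + (\<Sum>j\<in>{i<..n}. if j = Suc i then path_load g i else 0)"
    unfolding jump_flow_def by (simp add: sum.distrib)
  also have "(\<Sum>j\<in>{i<..n}. of_bool (j \<in> g i) :: int) = int (card (g i))"
    using jumps_within by (simp add: sum.If_cases)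
  also have "(\<Sum>j\<in>{i<..n}. if j = Suc i then path_load g i else 0) = (if i < n then path_load g i else 0)"
    by (simp add: sum.delta)
  finally show ?thesis .
qed

lemma sum_jump_flow_in:
  assumes "i \<le> n"
  shows "(\<Sum>k<i. jump_flow n g k i) =
    (\<Sum>k<i. of_bool (i \<in> g k)) + (if i = 0 then 0 else path_load g (i - 1))"
proof -
  have "jump_flow n g k i = of_bool (i \<in> g k) + (if k = i - 1 then path_load g k else 0)" if "k < i" for k
    using assms that unfolding jump_flow_def by auto
  then have "(\<Sum>k<i. jump_flow n g k i) =
      (\<Sum>k<i. of_bool (i \<in> g k)) + (\<Sum>k<i. if k = i - 1 then path_load g k else 0)"
    by (simp add: sum.distrib)
  also have "(\<Sum>k<i. if k = i - 1 then path_load g k else 0) = (if i = 0 then 0 else path_load g (i - 1))"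
    by (simp add: sum.delta)
  finally show ?thesis .
qed

lemma jump_flow_in_flow_points:
  assumes adm: "admissible_jumps n g"
  shows "jump_flow n g \<in> flow_points n (Nvec n)"
proof -
  have sub: "g k \<subseteq> {Suc k<..n}" for k
    using adm unfolding admissible_jumps_def by blast
  then have fin: "finite (g k)" for k
    using finite_subset by blast
  have "(\<Sum>j\<in>{i<..n}. jump_flow n g i j) - (\<Sum>k<i. jump_flow n g k i) = Nvec n i" if "i \<le> n" for i
  proof (cases i)
    case 0
    have "g 0 \<subseteq> {0<..}"
      using sub[of 0] by auto
    then show ?thesis
      using sum_jump_flow_out[of g i, OF sub[of i] that] sum_jump_flow_in[OF that] path_load_0[of g] 0
      by (auto simp: Nvec_def)
  next
    case (Suc m)
    have step: "path_load g i = path_load g m + 1 + (\<Sum>k<i. of_bool (i \<in> g k)) - int (card (g i))"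
      unfolding Suc using sub[of "Suc m"] by (intro path_load_Suc fin) auto
    have inflow: "(\<Sum>k<i. jump_flow n g k i) = (\<Sum>k<i. of_bool (i \<in> g k)) + path_load g m"
      using sum_jump_flow_in[OF that] Suc by simp
    show ?thesis
    proof (cases "i < n")
      case True
      then show ?thesis
        using sum_jump_flow_out[of g i, OF sub[of i] that] inflow step by (simp add: Nvec_def)
    next
      case False
      then have "i = n" "g i = {}"
        using that sub[of i] by auto
      moreover have "path_load g n = int n + 1"
        using sub by (intro path_load_last) force
      ultimately show ?thesis
        using sum_jump_flow_out[of g i, OF sub[of i] that] inflow step by (simp add: Nvec_def)
    qed
  qed
  moreover have "0 \<le> jump_flow n g i j" for i j
    using path_load_nonneg[OF adm, of i] unfolding jump_flow_def by auto
  moreover have "jump_flow n g i j = 0" if "\<not> (i < j \<and> j \<le> n)" for i j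
    using that by (auto simp: jump_flow_def)
  ultimately show ?thesis
    unfolding flow_points_def by blast
qed

lemma inj_on_jump_flow: "inj_on (jump_flow n) {g. \<forall>k. g k \<subseteq> {Suc k<..n}}"
proof (rule inj_onI)
  fix g g' assume g: "g \<in> {g. \<forall>k. g k \<subseteq> {Suc k<..n}}" and g': "g' \<in> {g. \<forall>k. g k \<subseteq> {Suc k<..n}}"
    and eq: "jump_flow n g = jump_flow n g'"
  have recover: "h k = {j. Suc k < j \<and> jump_flow n h k j = 1}" if "h \<in> {g. \<forall>k. g k \<subseteq> {Suc k<..n}}" for h k
    using that unfolding jump_flow_def by force
  show "g = g'"
    using recover[OF g] recover[OF g'] eq by (auto simp: fun_eq_iff)
qed

lemma card_le_c_seq:
  assumes "\<And>g. g \<in> G \<Longrightarrow> admissible_jumps n g"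
  shows "card G \<le> c_seq n"
proof -
  have "card G \<le> card (flow_points n (Nvec n))"
  proof (rule card_inj_on_le)
    show "inj_on (jump_flow n) G"
      using assms by (intro inj_on_subset[OF inj_on_jump_flow]) (auto simp: admissible_jumps_def)
  qed (use assms jump_flow_in_flow_points finite_flow_points in auto)
  then show ?thesis
    unfolding c_seq_def kostant_def .
qed

lemma admissible_jumps_if_short:
  assumes ha: "h * (s + 1) \<le> a"
    and short: "\<And>k. g k \<subseteq> {Suc k<..n} \<inter> {..k + s + 1}"
    and few: "\<And>k. card (g k) \<le> h"
    and late: "\<And>k. k < a \<Longrightarrow> g k = {}"
  shows "admissible_jumps n g"
  unfolding admissible_jumps_def
proof (intro conjI allI impI)
  show "g k \<subseteq> {Suc k<..n}" for k
    using short[of k] by blast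
  fix i
  show "(\<Sum>k\<le>i. card (g k \<inter> {i<..})) \<le> i + 1"
  proof (cases "a \<le> i")
    case False
    then show ?thesis using late by simp
  next
    case True
    have "g k \<inter> {i<..} = {}" if "k < i - s" for k
      using short[of k] that by auto
    then have "(\<Sum>k\<le>i. card (g k \<inter> {i<..})) = (\<Sum>k\<in>{i - s..i}. card (g k \<inter> {i<..}))"
      by (intro sum.mono_neutral_right) auto
    also have "\<dots> \<le> (\<Sum>k\<in>{i - s..i}. h)"
    proof (intro sum_mono)
      fix k
      have "finite (g k)"
        using short[of k] by (meson finite_greaterThanAtMost finite_subset inf.boundedE)
      then show "card (g k \<inter> {i<..}) \<le> h"
        using few[of k] by (meson card_mono inf_le1 order_trans)
    qed
    also have "\<dots> = card {i - s..i} * h"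
      by simp
    also have "\<dots> \<le> (s + 1) * h"
      by (intro mult_right_mono) auto
    finally show ?thesis
      using ha True by (simp add: mult.commute)
  qed
qed

lemma c_seq_ge_binomial_power:
  assumes ha: "h * (s + 1) \<le> a"
  shows "(s choose h) ^ (n - s - a) \<le> c_seq n"
proof -
  define K where "K = {a..<n - s}"
  define W where "W k = {S. S \<subseteq> {Suc k<..k + s + 1} \<and> card S = h}" for k
  define extend where "extend \<sigma> k = (if k \<in> K then \<sigma> k else {})" for \<sigma> :: "nat \<Rightarrow> nat set" and k
  have "card (PiE K W) = (\<Prod>k\<in>K. card (W k))"
    by (simp add: K_def card_PiE)
  also have "\<dots> = (s choose h) ^ (n - s - a)"
    unfolding W_def by (simp add: K_def n_subsets)
  finally have card_choices: "card (PiE K W) = (s choose h) ^ (n - s - a)" .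
  have "inj_on extend (PiE K W)"
  proof (rule inj_onI)
    fix \<sigma> \<tau> assume "\<sigma> \<in> PiE K W" "\<tau> \<in> PiE K W" "extend \<sigma> = extend \<tau>"
    then show "\<sigma> = \<tau>"
      unfolding extend_def by (intro PiE_ext) (auto simp: fun_eq_iff split: if_splits)
  qed
  then have "card (extend ` PiE K W) = (s choose h) ^ (n - s - a)"
    by (simp add: card_image card_choices)
  moreover have "admissible_jumps n (extend \<sigma>)" if "\<sigma> \<in> PiE K W" for \<sigma>
  proof (rule admissible_jumps_if_short[OF ha])
    fix k
    have choice: "\<sigma> k \<subseteq> {Suc k<..k + s + 1} \<and> card (\<sigma> k) = h" if "k \<in> K"
      using PiE_mem[OF \<open>\<sigma> \<in> PiE K W\<close> that] unfolding W_def by blast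
    show "extend \<sigma> k \<subseteq> {Suc k<..n} \<inter> {..k + s + 1}"
    proof (cases "k \<in> K")
      case True
      then have "{Suc k<..k + s + 1} \<subseteq> {Suc k<..n} \<inter> {..k + s + 1}"
        unfolding K_def by auto
      with choice[OF True] True show ?thesis
        unfolding extend_def by auto
    qed (simp add: extend_def)
    show "card (extend \<sigma> k) \<le> h"
      using choice unfolding extend_def by simp
    show "k < a \<Longrightarrow> extend \<sigma> k = {}"
      by (simp add: extend_def K_def)
  qed
  ultimately show ?thesis
    using card_le_c_seq[of "extend ` PiE K W" n] by auto
qed

lemma two_power_le_c_seq:
  assumes "2 * (4 * q\<^sup>2 + 5 * q) \<le> n"
  shows "2 ^ (q * n) \<le> c_seq n"
proof -
  define e where "e = n - 4 * q - q * (4 * q + 1)"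
  have "n \<le> 2 * e"
    using assms unfolding e_def by (simp add: power2_eq_square algebra_simps)
  have "4 ^ q \<le> (4 * q) choose q"
  proof -
    have "(real (4 * q) / real q) ^ q \<le> real ((4 * q) choose q)"
      by (rule binomial_ge_n_over_k_pow_k) simp
    then have "real (4 ^ q) \<le> real ((4 * q) choose q)"
      by (cases "q = 0") auto
    then show ?thesis
      by linarith
  qed
  have "(2::nat) ^ (q * n) \<le> 2 ^ (q * (2 * e))"
    using \<open>n \<le> 2 * e\<close> by (intro power_increasing) auto
  also have "\<dots> = (2 ^ 2) ^ (q * e)"
    by (metis power_mult mult.left_commute)
  also have "\<dots> = (4 ^ q) ^ e"
    by (simp add: power_mult)
  also have "\<dots> \<le> ((4 * q) choose q) ^ e"
    using \<open>4 ^ q \<le> (4 * q) choose q\<close> by (rule power_mono) simp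
  also have "\<dots> \<le> c_seq n"
    unfolding e_def by (rule c_seq_ge_binomial_power) simp
  finally show ?thesis .
qed

lemma quadratic_le_two_power: "12 \<le> q \<Longrightarrow> 8 * q\<^sup>2 + 10 * q + 3 \<le> (2::nat) ^ (q - 1)"
proof (induction q rule: dec_induct)
  case base
  then show ?case by simp
next
  case (step m)
  have "8 * (Suc m)\<^sup>2 + 10 * Suc m + 3 = (8 * m\<^sup>2 + 10 * m + 3) + (16 * m + 18)"
    by (simp add: power2_eq_square)
  also have "16 * m + 18 \<le> 8 * m\<^sup>2"
  proof -
    have "12 * m \<le> m * m"
      using mult_le_mono1[OF step.hyps(1), of m] by simp
    then show ?thesis
      using step.hyps(1) unfolding power2_eq_square by linarith
  qed
  also have "(8 * m\<^sup>2 + 10 * m + 3) + 8 * m\<^sup>2 \<le> 2 * 2 ^ (m - 1)"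
    using step.IH by simp
  also have "\<dots> = 2 ^ (Suc m - 1)"
    using step.hyps(1) by (cases m) auto
  finally show ?case
    by simp
qed

lemma succ_power_le_c_seq:
  assumes "3000 \<le> n"
  shows "(n + 1) ^ (n - 1) \<le> c_seq n"
proof -
  obtain p where p: "2 ^ p \<le> n + 1" "n + 1 < 2 ^ (p + 1)"
    using ex_power_ivl1[of 2 "n + 1"] by auto
  define q where "q = p + 1"
  have "12 \<le> q"
  proof (rule ccontr)
    assume "\<not> 12 \<le> q"
    then have "(2::nat) ^ q \<le> 2 ^ 11"
      by (intro power_increasing) auto
    then show False
      using p(2) assms unfolding q_def by simp
  qed
  then have "8 * q\<^sup>2 + 10 * q + 3 \<le> n + 1"
    using quadratic_le_two_power[of q] p(1) unfolding q_def by simp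
  then have "2 * (4 * q\<^sup>2 + 5 * q) \<le> n"
    by simp
  have "(n + 1) ^ (n - 1) \<le> (n + 1) ^ n"
    by (rule power_increasing) auto
  also have "\<dots> \<le> (2 ^ q) ^ n"
    using p(2) unfolding q_def by (intro power_mono) auto
  also have "\<dots> = 2 ^ (q * n)"
    by (simp add: power_mult)
  also have "\<dots> \<le> c_seq n"
    by (rule two_power_le_c_seq) fact
  finally show ?thesis .
qed

lemma ln_c_seq_lower_bound:
  "\<forall>\<^sub>F n in at_top. real n / 4 * (ln (real n))\<^sup>2 \<le> ln (real (c_seq n))"
proof -
  have "\<forall>\<^sub>F n in at_top. real n / 2 + 5 / 2 * sqrt (real n) \<le> real n"
    by real_asymp
  moreover have "\<forall>\<^sub>F n in at_top. real n / 4 * (ln (real n))\<^sup>2 \<le> (sqrt (real n) / 4 - 1) * real n * ln 2"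
    by real_asymp
  ultimately show ?thesis
  proof eventually_elim
    case (elim n)
    define q where "q = nat \<lfloor>sqrt (real n) / 4\<rfloor>"
    have "0 \<le> sqrt (real n)"
      by simp
    then have q_le: "real q \<le> sqrt (real n) / 4" and q_ge: "sqrt (real n) / 4 - 1 \<le> real q"
      unfolding q_def by linarith+
    have "real q ^ 2 \<le> (sqrt (real n) / 4) ^ 2"
      using q_le by (intro power_mono) auto
    then have "real (2 * (4 * q\<^sup>2 + 5 * q)) \<le> real n / 2 + 5 / 2 * sqrt (real n)"
      using q_le by (simp add: power_divide)
    then have "2 * (4 * q\<^sup>2 + 5 * q) \<le> n"
      using elim(1) by linarith
    then have "real (2 ^ (q * n)) \<le> real (c_seq n)"
      by (intro of_nat_mono two_power_le_c_seq)
    then have "ln (2 ^ (q * n)) \<le> ln (real (c_seq n))"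
      by (intro ln_mono) simp_all
    moreover have "(sqrt (real n) / 4 - 1) * real n * ln 2 \<le> ln (2 ^ (q * n))"
      using q_ge by (simp add: ln_realpow mult_right_mono)
    ultimately show ?case
      using elim(2) by linarith
  qed
qed

theorem theorem1p2:
  shows "(\<exists>C::real. \<forall>\<^sub>F n in at_top.
            ln (real (c_seq n)) \<ge> real n / 4 * (ln (real n))\<^sup>2 - C * (real n * ln (real n)))
       \<and> (\<forall>n\<ge>3000. real (c_seq n) \<ge> real (n + 1) ^ (n - 1))"
proof
  show "\<exists>C::real. \<forall>\<^sub>F n in at_top.
            ln (real (c_seq n)) \<ge> real n / 4 * (ln (real n))\<^sup>2 - C * (real n * ln (real n))"
    using ln_c_seq_lower_bound by (intro exI[of _ 0]) simp
  show "\<forall>n\<ge>3000. real (c_seq n) \<ge> real (n + 1) ^ (n - 1)"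
    using succ_power_le_c_seq by (metis of_nat_le_iff of_nat_power)
qed

end
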